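(* If $X$ is a discrete metric space with bounded geometry and finite APC-decomposition complexity, then $X$ has property A.
   Context: A discrete metric space $X$ has bounded geometry if for every $r>0$ there is $N_r$ with $|B(x,r)|<N_r$ for all $x\in X$. Such an $X$ has property A if for each $R,\varepsilon>0$ there is a map $\xi\colon X\to\ell^1(X)$ with $\|\xi_x\|_1=1$ for all $x$, $\|\xi_{x_1}-\xi_{x_2}\|_1\le\varepsilon$ whenever $d(x_1,x_2)\le R$, and some $S>0$ with $\operatorname{supp}\xi_x\subset\bar B(x,S)$ for all $x$. A family $\mathcal{U}$ of metric subspaces of $(X,d)$ is $r$-disjoint if $d(x,y)>r$ whenever $x\in U$, $y\in U'$, $U\neq U'$ in $\mathcal{U}$. For families $\mathcal{X},\mathcal{Y}$ and $R\in\mathbb{R}^{\mathbb{N}}$, $\mathcal{X}\xrightarrow{R}\mathcal{Y}$ means: there is an integer $k$ such that for each $X\in\mathcal{X}$ there are subcollections $\mathcal{U}_1,\dots,\mathcal{U}_k\subseteq\mathcal{Y}$ of subspaces of $X$, each $\mathcal{U}_i$ being $R_i$-disjoint, with $\bigcup_i\mathcal{U}_i$ covering $X$. A family is bounded if the diameters of its members are uniformly bounded. $\mathfrak{C}_0$ is the class of bounded families; for an ordinal $\alpha>0$, $\mathfrak{C}_\alpha$ is the class of families $\mathcal{X}$ such that for every $R\in\mathbb{R}^{\mathbb{N}}$ there exist $\beta<\alpha$ and $\mathcal{Y}\in\mathfrak{C}_\beta$ with $\mathcal{X}\xrightarrow{R}\mathcal{Y}$. A metric space has finite APC-decomposition complexity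 if it is a member of some family belonging to $\mathfrak{C}_\alpha$ for some ordinal $\alpha$. *)

theory Defs
  imports "HOL-Analysis.Analysis"
begin

text \<open>Metric
  subspaces are subsets with the restricted distance d.\<close>

definition discrete_space :: "'a set \<Rightarrow> ('a \<Rightarrow> 'a \<Rightarrow> real) \<Rightarrow> bool" where
  "discrete_space X d \<longleftrightarrow> (\<forall>x\<in>X. \<exists>e>0. \<forall>y\<in>X. d x y < e \<longrightarrow> y = x)"

definition open_ball :: "'a set \<Rightarrow> ('a \<Rightarrow> 'a \<Rightarrow> real) \<Rightarrow> 'a \<Rightarrow> real \<Rightarrow> 'a set" where
  "open_ball X d x r = {y\<in>X. d x y < r}"

definition bounded_geometry :: "'a set \<Rightarrow> ('a \<Rightarrow> 'a \<Rightarrow> real) \<Rightarrow> bool" where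
  "bounded_geometry X d \<longleftrightarrow>
     (\<forall>r>0. \<exists>N::nat. \<forall>x\<in>X. finite (open_ball X d x r) \<and> card (open_ball X d x r) < N)"

text \<open>Property A, with \<open>\<xi> x\<close> an element of \<open>\<ell>\<^sup>1(X)\<close> (real valued functions on X,
  norm given by the (possibly infinite) sum of absolute values over X).\<close>
definition property_A :: "'a set \<Rightarrow> ('a \<Rightarrow> 'a \<Rightarrow> real) \<Rightarrow> bool" where
  "property_A X d \<longleftrightarrow>
     (\<forall>R>0. \<forall>\<epsilon>>0. \<exists>\<xi> :: 'a \<Rightarrow> 'a \<Rightarrow> real.
        (\<forall>x\<in>X. (\<lambda>y. \<bar>\<xi> x y\<bar>) summable_on X \<and> infsum (\<lambda>y. \<bar>\<xi> x y\<bar>) X = 1) \<and>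
        (\<forall>x1\<in>X. \<forall>x2\<in>X. d x1 x2 \<le> R \<longrightarrow>
            infsum (\<lambda>y. \<bar>\<xi> x1 y - \<xi> x2 y\<bar>) X \<le> \<epsilon>) \<and>
        (\<exists>S>0. \<forall>x\<in>X. \<forall>y\<in>X. \<xi> x y \<noteq> 0 \<longrightarrow> d x y \<le> S))"

definition r_disjoint :: "('a \<Rightarrow> 'a \<Rightarrow> real) \<Rightarrow> real \<Rightarrow> 'a set set \<Rightarrow> bool" where
  "r_disjoint d r \<U> \<longleftrightarrow>
     (\<forall>U\<in>\<U>. \<forall>U'\<in>\<U>. U \<noteq> U' \<longrightarrow> (\<forall>x\<in>U. \<forall>y\<in>U'. d x y > r))"

definition bounded_family :: "('a \<Rightarrow> 'a \<Rightarrow> real) \<Rightarrow> 'a set set \<Rightarrow> bool" where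
  "bounded_family d \<X> \<longleftrightarrow> (\<exists>D. \<forall>U\<in>\<X>. \<forall>x\<in>U. \<forall>y\<in>U. d x y \<le> D)"

definition decomposes :: "('a \<Rightarrow> 'a \<Rightarrow> real) \<Rightarrow> 'a set set \<Rightarrow> (nat \<Rightarrow> real) \<Rightarrow> 'a set set \<Rightarrow> bool" where
  "decomposes d \<X> R \<Y> \<longleftrightarrow>
     (\<exists>k::nat. \<forall>X\<in>\<X>. \<exists>\<U> :: nat \<Rightarrow> 'a set set.
        (\<forall>i\<in>{1..k}. \<U> i \<subseteq> \<Y> \<and> (\<forall>V\<in>\<U> i. V \<subseteq> X) \<and> r_disjoint d (R i) (\<U> i)) \<and>
        X \<subseteq> \<Union>(\<Union>i\<in>{1..k}. \<U> i))"

text \<open>The union over all ordinals \<alpha> of the classes \<open>\<frak>C\<^sub>\<alpha>\<close> (restricted to families of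
  subspaces of one ambient space), as the least class closed under the two
  formation rules.\<close>
inductive finite_apc :: "('a \<Rightarrow> 'a \<Rightarrow> real) \<Rightarrow> 'a set set \<Rightarrow> bool" for d where
  base: "bounded_family d \<X> \<Longrightarrow> finite_apc d \<X>"
| step: "(\<forall>R. \<exists>\<Y>. finite_apc d \<Y> \<and> decomposes d \<X> R \<Y>) \<Longrightarrow> finite_apc d \<X>"

definition finite_APC_complexity :: "'a set \<Rightarrow> ('a \<Rightarrow> 'a \<Rightarrow> real) \<Rightarrow> bool" where
  "finite_APC_complexity X d \<longleftrightarrow> (\<exists>\<X>. X \<in> \<X> \<and> finite_apc d \<X>)"

end

theory Submission
  imports Defs
begin

text \<open>Call a family of subspaces uniformly A if, for all \<open>R\<close> and \<open>\<epsilon>\<close>, property-A maps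
  on all its members can be chosen with one common support radius \<open>S\<close>. Bounded families are
  uniformly A: take the uniform probability on each member, which is finite by bounded
  geometry. Uniform property A also passes from \<open>\<Y>\<close> to \<open>\<X>\<close> whenever \<open>\<X>\<close> decomposes over
  \<open>\<Y>\<close> with rapidly growing disjointness radii: if \<open>Z \<in> \<X>\<close> is covered by families \<open>U\<^sub>1, \<dots>, U\<^sub>k\<close>
  whose members are \<open>(2 \<cdot> 2\<^sup>iM + 1)R\<close>-disjoint in \<open>U\<^sub>i\<close>, then each point lies within \<open>2\<^sup>iMR\<close> of at
  most one piece of \<open>U\<^sub>i\<close>, and points at distance at most \<open>R\<close> see the same piece. Glue the maps
  of these pieces with weights that fall from 1 on the piece to 0 at distance \<open>2\<^sup>iMR\<close>: they
  change by at most \<open>1/(2\<^sup>iM)\<close> along a step of length \<open>R\<close>, and their sum is at least 1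
  because the point lies in some piece. The glued map therefore varies by at most
  \<open>2/M + \<epsilon>\<close>. Induction over \<open>finite_apc\<close> finishes the proof.\<close>

lemma infsum_eq_sum_superset_support:
  fixes f :: "'a \<Rightarrow> 'b::{comm_monoid_add, t2_space}"
  assumes "finite A" "A \<subseteq> X" "\<And>y. y \<in> X \<Longrightarrow> f y \<noteq> 0 \<Longrightarrow> y \<in> A"
  shows "infsum f X = sum f A"
proof -
  have "infsum f X = infsum f A"
    by (rule infsum_cong_neutral) (use assms in auto)
  then show ?thesis using assms by simp
qed

lemma summable_on_superset_support:
  fixes f :: "'a \<Rightarrow> 'b::{comm_monoid_add, topological_space}"
  assumes "finite A" "A \<subseteq> X" "\<And>y. y \<in> X \<Longrightarrow> f y \<noteq> 0 \<Longrightarrow> y \<in> A"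
  shows "f summable_on X"
proof -
  have "f summable_on X \<longleftrightarrow> f summable_on A"
    by (rule summable_on_cong_neutral) (use assms in auto)
  then show ?thesis using assms by simp
qed

lemma sum_abs_diff_normalized_le:
  fixes w v :: "'i \<Rightarrow> real"
  assumes "finite I" "\<forall>i\<in>I. 0 \<le> v i" "sum w I \<ge> 1" "sum v I \<ge> 1"
  shows "(\<Sum>i\<in>I. \<bar>w i / sum w I - v i / sum v I\<bar>) \<le> 2 * (\<Sum>i\<in>I. \<bar>w i - v i\<bar>)"
proof -
  define W V \<Delta> where "W = sum w I" and "V = sum v I" and "\<Delta> = (\<Sum>i\<in>I. \<bar>w i - v i\<bar>)"
  have W1: "W \<ge> 1" and V1: "V \<ge> 1" using assms W_def V_def by auto
  have pointwise: "\<bar>w i / W - v i / V\<bar> \<le> \<bar>w i - v i\<bar> / W + (v i / V) * (\<bar>V - W\<bar> / W)"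
    if "i \<in> I" for i
  proof -
    have "w i / W - v i / V = (w i - v i) / W + (v i / V) * ((V - W) / W)"
      using W1 V1 by (simp add: field_simps)
    also have "\<bar>\<dots>\<bar> \<le> \<bar>(w i - v i) / W\<bar> + \<bar>(v i / V) * ((V - W) / W)\<bar>"
      by (rule abs_triangle_ineq)
    also have "\<dots> = \<bar>w i - v i\<bar> / W + (v i / V) * (\<bar>V - W\<bar> / W)"
      using W1 V1 assms(2) that by (simp add: abs_mult)
    finally show ?thesis .
  qed
  have total_diff: "\<bar>V - W\<bar> \<le> \<Delta>"
  proof -
    have "V - W = (\<Sum>i\<in>I. v i - w i)" unfolding V_def W_def by (simp add: sum_subtractf)
    then have "\<bar>V - W\<bar> \<le> (\<Sum>i\<in>I. \<bar>v i - w i\<bar>)" by (simp add: sum_abs)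
    then show ?thesis unfolding \<Delta>_def by (simp add: abs_minus_commute)
  qed
  have "(\<Sum>i\<in>I. \<bar>w i / W - v i / V\<bar>) \<le> (\<Sum>i\<in>I. \<bar>w i - v i\<bar> / W + (v i / V) * (\<bar>V - W\<bar> / W))"
    using pointwise by (rule sum_mono)
  also have "\<dots> = \<Delta> / W + (sum v I / V) * (\<bar>V - W\<bar> / W)"
    unfolding \<Delta>_def by (simp add: sum.distrib sum_divide_distrib sum_distrib_right)
  also have "\<dots> = (\<Delta> + \<bar>V - W\<bar>) / W"
    using V1 V_def by (simp add: add_divide_distrib)
  also have "\<dots> \<le> 2 * \<Delta> / W"
    using total_diff W1 by (simp add: divide_right_mono)
  also have "\<dots> \<le> 2 * \<Delta> / 1"
    using W1 sum_nonneg[of I "\<lambda>i. \<bar>w i - v i\<bar>"] unfolding \<Delta>_def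
    by (intro divide_left_mono) auto
  finally show ?thesis unfolding W_def V_def \<Delta>_def by simp
qed

lemma sum_inverse_powers_of_two_le:
  assumes "c > 0"
  shows "(\<Sum>i\<in>{1..k}. 1 / (2^i * c)) \<le> 1 / (c::real)"
proof -
  have "(\<Sum>i\<in>{1..k}. (1/2::real)^i) = 1 - (1/2)^k"
    by (induction k) (auto simp: sum.atLeast1_atMost_eq)
  moreover have "(\<Sum>i\<in>{1..k}. 1 / (2^i * c)) = (\<Sum>i\<in>{1..k}. (1/2::real)^i) / c"
    by (simp add: sum_divide_distrib power_one_over)
  ultimately have "(\<Sum>i\<in>{1..k}. 1 / (2^i * c)) = (1 - (1/2)^k) / c"
    by simp
  also have "\<dots> \<le> 1 / c" using assms by (simp add: divide_right_mono)
  finally show ?thesis .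
qed

lemma ex_nat_two_div_le_half:
  assumes "\<epsilon> > 0"
  shows "\<exists>M::nat. M \<ge> 1 \<and> 2 / real M \<le> \<epsilon> / 2"
proof (intro exI conjI)
  define M where "M = nat \<lceil>4 / \<epsilon>\<rceil> + 1"
  show "M \<ge> 1" unfolding M_def by simp
  have "4 / \<epsilon> < real M" unfolding M_def using real_nat_ceiling_ge[of "4 / \<epsilon>"] by linarith
  then have "4 < \<epsilon> * real M" using assms by (simp add: field_simps)
  then show "2 / real M \<le> \<epsilon> / 2" using \<open>M \<ge> 1\<close> by (simp add: field_simps)
qed

locale bounded_geometry_metric = Metric_space X d for X :: "'a set" and d +
  assumes bounded_geometry: "bounded_geometry X d"
begin

lemma finite_mcball: "finite (mcball x r)"
proof (cases "x \<in> X")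
  case True
  have "\<exists>N::nat. \<forall>x\<in>X. finite (open_ball X d x (\<bar>r\<bar> + 1)) \<and> card (open_ball X d x (\<bar>r\<bar> + 1)) < N"
    using bounded_geometry unfolding bounded_geometry_def by simp
  then have "finite (open_ball X d x (\<bar>r\<bar> + 1))" using True by blast
  moreover have "mcball x r \<subseteq> open_ball X d x (\<bar>r\<bar> + 1)"
    unfolding open_ball_def by auto
  ultimately show ?thesis using finite_subset by blast
qed (simp add: mcball_def)

definition A_map_on :: "'a set \<Rightarrow> real \<Rightarrow> real \<Rightarrow> real \<Rightarrow> ('a \<Rightarrow> 'a \<Rightarrow> real) \<Rightarrow> bool" where
  "A_map_on V R \<epsilon> S \<xi> \<longleftrightarrow> (\<forall>x\<in>V. (\<forall>y. 0 \<le> \<xi> x y) \<and> (\<forall>y. \<xi> x y \<noteq> 0 \<longrightarrow> y \<in> mcball x S)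
     \<and> infsum (\<xi> x) X = 1
     \<and> (\<forall>x'\<in>V. d x x' \<le> R \<longrightarrow> infsum (\<lambda>y. \<bar>\<xi> x y - \<xi> x' y\<bar>) X \<le> \<epsilon>))"

definition uniformly_A :: "'a set set \<Rightarrow> bool" where
  "uniformly_A \<F> \<longleftrightarrow> (\<forall>R>0. \<forall>\<epsilon>>0. \<exists>S. \<forall>V\<in>\<F>. V \<subseteq> X \<longrightarrow> (\<exists>\<xi>. A_map_on V R \<epsilon> S \<xi>))"

lemma A_map_on_mono: "A_map_on V R \<epsilon> S \<xi> \<Longrightarrow> \<epsilon> \<le> \<epsilon>' \<Longrightarrow> A_map_on V R \<epsilon>' S \<xi>"
  unfolding A_map_on_def by force

lemma bounded_family_uniformly_A:
  assumes "bounded_family d \<F>"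
  shows "uniformly_A \<F>"
  unfolding uniformly_A_def
proof (intro allI impI)
  fix R \<epsilon> :: real assume "\<epsilon> > 0"
  obtain D where D: "\<forall>U\<in>\<F>. \<forall>x\<in>U. \<forall>y\<in>U. d x y \<le> D"
    using assms unfolding bounded_family_def by blast
  have "\<exists>\<xi>. A_map_on V R \<epsilon> \<bar>D\<bar> \<xi>" if V: "V \<in> \<F>" "V \<subseteq> X" for V
  proof
    define \<xi> where "\<xi> = (\<lambda>(x::'a) y. if y \<in> V then 1 / real (card V) else 0)"
    show "A_map_on V R \<epsilon> \<bar>D\<bar> \<xi>"
      unfolding A_map_on_def
    proof (intro ballI conjI allI impI)
      fix x assume x: "x \<in> V"
      have "V \<subseteq> mcball x D" using D V x by auto
      then have fin: "finite V" using finite_mcball finite_subset by blast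
      show "0 \<le> \<xi> x y" for y unfolding \<xi>_def by auto
      show "y \<in> mcball x \<bar>D\<bar>" if "\<xi> x y \<noteq> 0" for y
        using that D V x unfolding \<xi>_def by (fastforce split: if_splits)
      have "infsum (\<xi> x) X = sum (\<xi> x) V"
        by (rule infsum_eq_sum_superset_support) (use fin V in \<open>auto simp: \<xi>_def split: if_splits\<close>)
      also have "\<dots> = 1" unfolding \<xi>_def using fin x card_gt_0_iff by fastforce
      finally show "infsum (\<xi> x) X = 1" .
      show "infsum (\<lambda>y. \<bar>\<xi> x y - \<xi> x' y\<bar>) X \<le> \<epsilon>" for x'
        unfolding \<xi>_def using \<open>\<epsilon> > 0\<close> by simp
    qed
  qed
  then show "\<exists>S. \<forall>V\<in>\<F>. V \<subseteq> X \<longrightarrow> (\<exists>\<xi>. A_map_on V R \<epsilon> S \<xi>)" by blast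
qed

lemma uniformly_A_imp_property_A:
  assumes "uniformly_A \<F>" "X \<in> \<F>"
  shows "property_A X d"
  unfolding property_A_def
proof (intro allI impI)
  fix R \<epsilon> :: real assume "R > 0" "\<epsilon> > 0"
  then obtain S \<xi> where \<xi>: "A_map_on X R \<epsilon> S \<xi>" using assms unfolding uniformly_A_def by blast
  have support: "d x y \<le> \<bar>S\<bar> + 1" if "x \<in> X" "\<xi> x y \<noteq> 0" for x y
    using \<xi> that unfolding A_map_on_def by fastforce
  show "\<exists>\<xi>. (\<forall>x\<in>X. (\<lambda>y. \<bar>\<xi> x y\<bar>) summable_on X \<and> infsum (\<lambda>y. \<bar>\<xi> x y\<bar>) X = 1) \<and>
        (\<forall>x1\<in>X. \<forall>x2\<in>X. d x1 x2 \<le> R \<longrightarrow> infsum (\<lambda>y. \<bar>\<xi> x1 y - \<xi> x2 y\<bar>) X \<le> \<epsilon>) \<and>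
        (\<exists>S>0. \<forall>x\<in>X. \<forall>y\<in>X. \<xi> x y \<noteq> 0 \<longrightarrow> d x y \<le> S)"
  proof (intro exI[of _ \<xi>] conjI ballI impI)
    fix x assume x: "x \<in> X"
    show "(\<lambda>y. \<bar>\<xi> x y\<bar>) summable_on X"
      by (rule summable_on_superset_support[of "mcball x S"])
        (use finite_mcball \<xi> x in \<open>auto simp: A_map_on_def\<close>)
    show "infsum (\<lambda>y. \<bar>\<xi> x y\<bar>) X = 1" using \<xi> x unfolding A_map_on_def by simp
  next
    show "infsum (\<lambda>y. \<bar>\<xi> x1 y - \<xi> x2 y\<bar>) X \<le> \<epsilon>" if "x1 \<in> X" "x2 \<in> X" "d x1 x2 \<le> R" for x1 x2
      using \<xi> that unfolding A_map_on_def by blast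
  next
    show "\<exists>S>0. \<forall>x\<in>X. \<forall>y\<in>X. \<xi> x y \<noteq> 0 \<longrightarrow> d x y \<le> S"
      using support by (intro exI[of _ "\<bar>S\<bar> + 1"]) auto
  qed
qed

end

locale A_gluing = bounded_geometry_metric X d for X :: "'a set" and d +
  fixes R :: real and M :: nat and Z :: "'a set" and \<epsilon> :: real and k :: nat
    and U :: "nat \<Rightarrow> 'a set set" and \<Xi> :: "'a set \<Rightarrow> 'a \<Rightarrow> 'a \<Rightarrow> real" and S :: real
  assumes R_pos: "R > 0" and M_pos: "M \<ge> 1" and Z_subset: "Z \<subseteq> X" and \<epsilon>_nonneg: "\<epsilon> \<ge> 0"
    and cover: "Z \<subseteq> \<Union>(\<Union>i\<in>{1..k}. U i)"
    and pieces_subset: "\<forall>i\<in>{1..k}. \<forall>W\<in>U i. W \<subseteq> Z"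
    and pieces_disjoint: "\<forall>i\<in>{1..k}. r_disjoint d ((2 * (2^i * real M) + 1) * R) (U i)"
    and pieces_A_map: "\<forall>i\<in>{1..k}. \<forall>W\<in>U i. A_map_on W ((2 * (2^k * real M) + 1) * R) \<epsilon> S (\<Xi> W)"
begin

definition scale :: "nat \<Rightarrow> real" where "scale i = 2^i * real M"

definition near :: "nat \<Rightarrow> 'a \<Rightarrow> 'a set \<Rightarrow> bool" where
  "near i x W \<longleftrightarrow> W \<in> U i \<and> (\<exists>v\<in>W. d x v < scale i * R)"

definition has_near :: "nat \<Rightarrow> 'a \<Rightarrow> bool" where "has_near i x \<longleftrightarrow> (\<exists>W. near i x W)"

definition near_piece :: "nat \<Rightarrow> 'a \<Rightarrow> 'a set" where "near_piece i x = (SOME W. near i x W)"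

definition anchor :: "nat \<Rightarrow> 'a \<Rightarrow> 'a" where
  "anchor i x = (SOME q. q \<in> near_piece i x \<and> d x q < scale i * R)"

text \<open>A discretised version of \<open>max 0 (1 - dist x W / (scale i * R))\<close>, which avoids
  infima of distances: count the multiples \<open>j R\<close>, \<open>j \<le> scale i\<close>, exceeding the distance.\<close>

definition levels :: "'a set \<Rightarrow> nat \<Rightarrow> 'a \<Rightarrow> nat set" where
  "levels W i x = {j\<in>{1..2^i*M}. \<exists>v\<in>W. d x v < real j * R}"

definition bump :: "'a set \<Rightarrow> nat \<Rightarrow> 'a \<Rightarrow> real" where
  "bump W i x = real (card (levels W i x)) / scale i"

definition weight :: "nat \<Rightarrow> 'a \<Rightarrow> real" where
  "weight i x = (if has_near i x then bump (near_piece i x) i x else 0)"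

definition total_weight :: "'a \<Rightarrow> real" where "total_weight x = (\<Sum>i\<in>{1..k}. weight i x)"

definition piece_map :: "nat \<Rightarrow> 'a \<Rightarrow> 'a \<Rightarrow> real" where
  "piece_map i x = (if has_near i x then \<Xi> (near_piece i x) (anchor i x) else (\<lambda>_. 0))"

definition glued :: "'a \<Rightarrow> 'a \<Rightarrow> real" where
  "glued x z = (\<Sum>i\<in>{1..k}. (weight i x / total_weight x) * piece_map i x z)"

definition support_radius :: real where "support_radius = scale k * R + S"

lemma scale_pos: "scale i > 0"
  unfolding scale_def using M_pos by simp

lemma scale_mono: "i \<le> k \<Longrightarrow> scale i \<le> scale k"
  unfolding scale_def using M_pos by (simp add: power_increasing)

lemma of_nat_scale: "real (2^i*M) = scale i"
  unfolding scale_def by simp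

lemma piece_A_map: "i \<in> {1..k} \<Longrightarrow> W \<in> U i \<Longrightarrow> A_map_on W ((2 * scale k + 1) * R) \<epsilon> S (\<Xi> W)"
  using pieces_A_map unfolding scale_def by blast

lemma piece_subset: "i \<in> {1..k} \<Longrightarrow> W \<in> U i \<Longrightarrow> W \<subseteq> X"
  using pieces_subset Z_subset by blast

lemma near_unique:
  assumes i: "i \<in> {1..k}" and xy: "x \<in> X" "y \<in> X" "d x y \<le> R"
    and near: "near i x W" "near i y W'"
  shows "W = W'"
proof (rule ccontr)
  assume ne: "W \<noteq> W'"
  obtain v v' where v: "v \<in> W" "d x v < scale i * R" and v': "v' \<in> W'" "d y v' < scale i * R"
    and WU: "W \<in> U i" "W' \<in> U i" using near unfolding near_def by blast
  have vX: "v \<in> X" "v' \<in> X" using piece_subset i WU v v' by blast+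
  have "d v v' \<le> d v x + d x v'" by (rule triangle[OF vX(1) xy(1) vX(2)])
  also have "d x v' \<le> d x y + d y v'" by (rule triangle[OF xy(1) xy(2) vX(2)])
  finally have "d v v' < (2 * scale i + 1) * R" using v v' xy commute[of v x] by (simp add: algebra_simps)
  moreover have "d v v' > (2 * (2^i * real M) + 1) * R"
    using pieces_disjoint i WU ne v v' unfolding r_disjoint_def by blast
  ultimately show False unfolding scale_def by simp
qed

lemma near_piece_anchor:
  assumes "has_near i x"
  shows "near i x (near_piece i x)" "near_piece i x \<in> U i"
    "anchor i x \<in> near_piece i x" "d x (anchor i x) < scale i * R"
proof -
  show near: "near i x (near_piece i x)"
    using assms unfolding has_near_def near_piece_def by (metis someI_ex)
  then show "near_piece i x \<in> U i" unfolding near_def by blast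
  have "\<exists>q. q \<in> near_piece i x \<and> d x q < scale i * R" using near unfolding near_def by blast
  then have "anchor i x \<in> near_piece i x \<and> d x (anchor i x) < scale i * R"
    unfolding anchor_def by (rule someI_ex)
  then show "anchor i x \<in> near_piece i x" "d x (anchor i x) < scale i * R" by auto
qed

lemma near_piece_eq:
  assumes "i \<in> {1..k}" "x \<in> X" "y \<in> X" "d x y \<le> R" "has_near i x" "has_near i y"
  shows "near_piece i x = near_piece i y"
  using near_unique[OF assms(1-4) near_piece_anchor(1)[OF assms(5)] near_piece_anchor(1)[OF assms(6)]] .

lemma levels_subset: "levels W i x \<subseteq> {1..2^i*M}"
  unfolding levels_def by auto

lemma bump_nonneg: "0 \<le> bump W i x"
  unfolding bump_def using scale_pos[of i] by simp

lemma bump_on_piece: "x \<in> W \<Longrightarrow> x \<in> X \<Longrightarrow> bump W i x = 1"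
proof -
  assume "x \<in> W" "x \<in> X"
  then have "levels W i x = {1..2^i*M}"
    unfolding levels_def using R_pos by (auto intro!: bexI[of _ x])
  then show ?thesis unfolding bump_def using of_nat_scale[of i] scale_pos[of i] by simp
qed

lemma bump_far: assumes "\<not> (\<exists>v\<in>W. d x v < scale i * R)" shows "bump W i x = 0"
proof -
  have "levels W i x = {}"
  proof (rule ccontr)
    assume "levels W i x \<noteq> {}"
    then obtain j v where j: "j \<in> {1..2^i*M}" "v \<in> W" "d x v < real j * R"
      unfolding levels_def by blast
    have "real j \<le> scale i" using j(1) of_nat_scale[of i] by (metis atLeastAtMost_iff of_nat_le_iff)
    then have "real j * R \<le> scale i * R" using R_pos by simp
    then show False using assms j by force
  qed
  then show ?thesis unfolding bump_def by simp
qed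

text \<open>A step of length at most \<open>R\<close> shifts each level \<open>j \<noteq> 2\<^sup>iM\<close> of \<open>x\<close> to the level \<open>j + 1\<close> of \<open>y\<close>.\<close>

lemma card_levels_le:
  assumes "x \<in> X" "y \<in> X" "d x y \<le> R" "W \<subseteq> X"
  shows "card (levels W i x) \<le> card (levels W i y) + 1"
proof -
  define n where "n = 2^i*M"
  have fin: "finite (levels W i x)" "finite (levels W i y)"
    by (rule finite_subset[OF levels_subset], simp)+
  have "Suc ` (levels W i x - {n}) \<subseteq> levels W i y"
  proof
    fix j' assume "j' \<in> Suc ` (levels W i x - {n})"
    then obtain j where j: "j' = Suc j" "j \<in> levels W i x" "j \<noteq> n" by blast
    then obtain v where v: "v \<in> W" "d x v < real j * R" "j \<in> {1..n}"
      unfolding levels_def n_def by blast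
    have "d y v \<le> d y x + d x v" by (rule triangle) (use assms v in auto)
    also have "\<dots> < R + real j * R" using v assms commute[of y x] by simp
    finally have "d y v < real (Suc j) * R" by (simp add: algebra_simps)
    then show "j' \<in> levels W i y" unfolding levels_def using v j by (auto simp: n_def)
  qed
  then have "card (Suc ` (levels W i x - {n})) \<le> card (levels W i y)"
    using card_mono fin(2) by blast
  moreover have "card (Suc ` (levels W i x - {n})) = card (levels W i x - {n})"
    by (rule card_image) simp
  moreover have "card (levels W i x) \<le> card (levels W i x - {n}) + 1"
  proof (cases "n \<in> levels W i x")
    case True
    then show ?thesis using fin(1) by (simp add: card_Diff_singleton_if card_gt_0_iff)
  qed simp
  ultimately show ?thesis by linarith
qed

lemma bump_variation:
  assumes "x \<in> X" "y \<in> X" "d x y \<le> R" "W \<subseteq> X"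
  shows "\<bar>bump W i x - bump W i y\<bar> \<le> 1 / scale i"
proof -
  have "card (levels W i x) \<le> card (levels W i y) + 1" "card (levels W i y) \<le> card (levels W i x) + 1"
    using card_levels_le[OF assms] card_levels_le[of y x W] assms commute[of x y] by auto
  then have "\<bar>real (card (levels W i x)) - real (card (levels W i y))\<bar> \<le> 1" by linarith
  then show ?thesis
    unfolding bump_def using scale_pos[of i] by (simp add: diff_divide_distrib[symmetric] divide_right_mono)
qed

lemma weight_nonneg: "0 \<le> weight i x"
  unfolding weight_def using bump_nonneg by auto

lemma weight_zero: "\<not> has_near i x \<Longrightarrow> weight i x = 0"
  unfolding weight_def by simp

lemma total_weight_ge_one: assumes "x \<in> Z" shows "total_weight x \<ge> 1"
proof -
  obtain i W where i: "i \<in> {1..k}" "W \<in> U i" "x \<in> W" using cover assms by blast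
  have xX: "x \<in> X" using assms Z_subset by blast
  have near: "near i x W" unfolding near_def using i xX R_pos scale_pos[of i] by force
  then have has_near: "has_near i x" unfolding has_near_def by blast
  then have "near_piece i x = W"
    using near_unique[OF i(1) xX xX _ near_piece_anchor(1)[OF has_near] near] R_pos xX by simp
  then have "weight i x = 1" unfolding weight_def using has_near bump_on_piece i xX by simp
  moreover have "weight i x \<le> total_weight x" unfolding total_weight_def
    using i(1) weight_nonneg by (intro member_le_sum) auto
  ultimately show ?thesis by simp
qed

lemma weight_variation:
  assumes i: "i \<in> {1..k}" and xy: "x \<in> Z" "y \<in> Z" "d x y \<le> R"
  shows "\<bar>weight i x - weight i y\<bar> \<le> 1 / scale i"
proof -
  have X: "x \<in> X" "y \<in> X" using xy Z_subset by auto
  have piece_X: "has_near i z \<Longrightarrow> near_piece i z \<subseteq> X" for z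
    using near_piece_anchor(2) piece_subset i by blast
  have far: "bump (near_piece i z) i z' = 0" if "has_near i z" "\<not> has_near i z'" for z z'
    using that near_piece_anchor(2)[OF that(1)] unfolding has_near_def near_def
    by (intro bump_far) blast
  show ?thesis
  proof (cases "has_near i x"; cases "has_near i y")
    assume "has_near i x" "has_near i y"
    then show ?thesis
      unfolding weight_def using near_piece_eq[OF i X xy(3)] bump_variation[OF X xy(3) piece_X] by simp
  next
    assume hx: "has_near i x" and hy: "\<not> has_near i y"
    then show ?thesis
      unfolding weight_def using far[OF hx hy] bump_variation[OF X xy(3) piece_X[OF hx], where i=i] by simp
  next
    assume hx: "\<not> has_near i x" and hy: "has_near i y"
    then show ?thesis
      unfolding weight_def using far[OF hy hx] bump_variation[OF X xy(3) piece_X[OF hy], where i=i] by simp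
  next
    assume "\<not> has_near i x" "\<not> has_near i y"
    then show ?thesis unfolding weight_def using scale_pos[of i] by simp
  qed
qed

lemma piece_map_anchor:
  assumes i: "i \<in> {1..k}" and near: "has_near i x"
  shows "piece_map i x = \<Xi> (near_piece i x) (anchor i x)"
    and "0 \<le> piece_map i x z" "piece_map i x z \<noteq> 0 \<Longrightarrow> z \<in> mcball (anchor i x) S"
    and "infsum (piece_map i x) X = 1"
proof -
  show eq: "piece_map i x = \<Xi> (near_piece i x) (anchor i x)"
    unfolding piece_map_def using near by simp
  have piece: "A_map_on (near_piece i x) ((2 * scale k + 1) * R) \<epsilon> S (\<Xi> (near_piece i x))"
    using piece_A_map i near_piece_anchor(2)[OF near] by blast
  have "(\<forall>y. 0 \<le> piece_map i x y) \<and> (\<forall>y. piece_map i x y \<noteq> 0 \<longrightarrow> y \<in> mcball (anchor i x) S)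
      \<and> infsum (piece_map i x) X = 1"
    using bspec[OF piece[unfolded A_map_on_def] near_piece_anchor(3)[OF near]] unfolding eq by blast
  then show "0 \<le> piece_map i x z" "piece_map i x z \<noteq> 0 \<Longrightarrow> z \<in> mcball (anchor i x) S"
    "infsum (piece_map i x) X = 1"
    by simp_all
qed

lemma piece_map_nonneg: "i \<in> {1..k} \<Longrightarrow> 0 \<le> piece_map i x z"
  using piece_map_anchor(2) by (cases "has_near i x") (auto simp: piece_map_def)

lemma piece_map_support:
  assumes i: "i \<in> {1..k}" and x: "x \<in> X" and nz: "piece_map i x z \<noteq> 0"
  shows "z \<in> mcball x support_radius"
proof -
  have near: "has_near i x" using nz unfolding piece_map_def by (auto split: if_splits)
  have z: "z \<in> X" "d (anchor i x) z \<le> S" "anchor i x \<in> X"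
    using piece_map_anchor(3)[OF i near nz] by auto
  have "d x z \<le> d x (anchor i x) + d (anchor i x) z" by (rule triangle[OF x z(3) z(1)])
  also have "\<dots> \<le> scale k * R + S"
    using near_piece_anchor(4)[OF near] z(2) scale_mono[of i] i R_pos
    by (smt (verit, best) atLeastAtMost_iff mult_right_mono)
  finally show ?thesis unfolding support_radius_def using x z by simp
qed

lemma sum_piece_map:
  assumes i: "i \<in> {1..k}" and x: "x \<in> X" and A: "finite A" "A \<subseteq> X" "mcball x support_radius \<subseteq> A"
  shows "sum (piece_map i x) A = (if has_near i x then 1 else 0)"
proof (cases "has_near i x")
  case True
  have "infsum (piece_map i x) X = sum (piece_map i x) A"
    by (rule infsum_eq_sum_superset_support) (use A piece_map_support[OF i x] in auto)
  then show ?thesis using piece_map_anchor(4)[OF i True] True by simp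
qed (simp add: piece_map_def)

lemma glued_nonneg: "x \<in> Z \<Longrightarrow> 0 \<le> glued x z"
  unfolding glued_def using total_weight_ge_one[of x] weight_nonneg piece_map_nonneg
  by (intro sum_nonneg) auto

lemma glued_support:
  assumes x: "x \<in> Z" and nz: "glued x z \<noteq> 0"
  shows "z \<in> mcball x support_radius"
proof -
  obtain i where "i \<in> {1..k}" "weight i x / total_weight x * piece_map i x z \<noteq> 0"
    using nz unfolding glued_def by (meson sum.not_neutral_contains_not_neutral)
  then show ?thesis using piece_map_support x Z_subset by (metis in_mono mult_zero_right)
qed

lemma sum_normalized_weight: "x \<in> Z \<Longrightarrow> (\<Sum>i\<in>{1..k}. weight i x / total_weight x) = 1"
  using total_weight_ge_one[of x] unfolding total_weight_def
  by (simp add: sum_divide_distrib[symmetric])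

lemma infsum_glued:
  assumes x: "x \<in> Z"
  shows "infsum (glued x) X = 1"
proof -
  define A where "A = mcball x support_radius"
  have xX: "x \<in> X" using x Z_subset by blast
  have A: "finite A" "A \<subseteq> X" "mcball x support_radius \<subseteq> A"
    unfolding A_def using finite_mcball by (auto simp: mcball_def)
  have "infsum (glued x) X = sum (glued x) A"
    by (rule infsum_eq_sum_superset_support) (use A glued_support[OF x] in \<open>auto simp: A_def\<close>)
  also have "\<dots> = (\<Sum>i\<in>{1..k}. (weight i x / total_weight x) * sum (piece_map i x) A)"
    unfolding glued_def by (simp add: sum.swap[of _ A] sum_distrib_left)
  also have "\<dots> = (\<Sum>i\<in>{1..k}. weight i x / total_weight x)"
    by (rule sum.cong) (use sum_piece_map[OF _ xX A] weight_zero in auto)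
  also have "\<dots> = 1" using sum_normalized_weight[OF x] .
  finally show ?thesis .
qed

lemma support_subset:
  assumes "x \<in> X" "y \<in> X" "d x y \<le> R" "mcball x (support_radius + R) \<subseteq> A"
  shows "mcball x support_radius \<subseteq> A" "mcball y support_radius \<subseteq> A"
proof -
  show "mcball x support_radius \<subseteq> A" using assms R_pos by auto
  have "d x z \<le> support_radius + R" if "z \<in> X" "d y z \<le> support_radius" for z
    using triangle[OF assms(1,2) that(1)] assms(3) that(2) by simp
  then show "mcball y support_radius \<subseteq> A" using assms by auto
qed

text \<open>Nearby points see the same piece, and their anchors are \<open>(2 scale i + 1) R\<close>-close, which
  is within the range controlled by the map of that piece.\<close>

lemma piece_map_variation:
  assumes i: "i \<in> {1..k}" and xy: "x \<in> X" "y \<in> X" "d x y \<le> R"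
    and near: "has_near i x" "has_near i y"
  shows "infsum (\<lambda>z. \<bar>piece_map i x z - piece_map i y z\<bar>) X \<le> \<epsilon>"
proof -
  define W where "W = near_piece i x"
  have W_y: "near_piece i y = W" unfolding W_def using near_piece_eq[OF i xy near] by simp
  have WU: "W \<in> U i" using near_piece_anchor(2)[OF near(1)] W_def by simp
  have anchors: "anchor i x \<in> W" "anchor i y \<in> W"
    using near_piece_anchor(3)[OF near(1)] near_piece_anchor(3)[OF near(2)] W_y W_def by auto
  have anchors_X: "anchor i x \<in> X" "anchor i y \<in> X" using anchors piece_subset[OF i WU] by blast+
  have "d (anchor i x) (anchor i y) \<le> d (anchor i x) x + d x (anchor i y)"
    by (rule triangle[OF anchors_X(1) xy(1) anchors_X(2)])
  also have "d x (anchor i y) \<le> d x y + d y (anchor i y)"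
    by (rule triangle[OF xy(1,2) anchors_X(2)])
  finally have "d (anchor i x) (anchor i y) < (2 * scale i + 1) * R"
    using near_piece_anchor(4)[OF near(1)] near_piece_anchor(4)[OF near(2)] xy(3)
      commute[of "anchor i x" x] by (simp add: algebra_simps)
  also have "\<dots> \<le> (2 * scale k + 1) * R" using scale_mono[of i] i R_pos by simp
  finally have "d (anchor i x) (anchor i y) \<le> (2 * scale k + 1) * R" by simp
  then show ?thesis
    using piece_A_map[OF i WU] anchors piece_map_anchor(1)[OF i near(1)] piece_map_anchor(1)[OF i near(2)]
    unfolding A_map_on_def W_def W_y by auto
qed

lemma piece_variation:
  assumes i: "i \<in> {1..k}" and xy: "x \<in> X" "y \<in> X" "d x y \<le> R"
    and A: "finite A" "A \<subseteq> X" "mcball x (support_radius + R) \<subseteq> A"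
    and ab: "0 \<le> a" "0 \<le> b" "\<not> has_near i x \<Longrightarrow> a = 0" "\<not> has_near i y \<Longrightarrow> b = 0"
  shows "(\<Sum>z\<in>A. \<bar>a * piece_map i x z - b * piece_map i y z\<bar>) \<le> \<bar>a - b\<bar> + b * \<epsilon>"
proof -
  have Ax: "mcball x support_radius \<subseteq> A" and Ay: "mcball y support_radius \<subseteq> A"
    using support_subset[OF xy A(3)] by auto
  have sx: "sum (piece_map i x) A = (if has_near i x then 1 else 0)"
    by (rule sum_piece_map[OF i xy(1) A(1,2) Ax])
  have sy: "sum (piece_map i y) A = (if has_near i y then 1 else 0)"
    by (rule sum_piece_map[OF i xy(2) A(1,2) Ay])
  show ?thesis
  proof (cases "has_near i x"; cases "has_near i y")
    assume near: "has_near i x" "has_near i y"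
    let ?\<eta>x = "piece_map i x" and ?\<eta>y = "piece_map i y"
    have "infsum (\<lambda>z. \<bar>?\<eta>x z - ?\<eta>y z\<bar>) X = (\<Sum>z\<in>A. \<bar>?\<eta>x z - ?\<eta>y z\<bar>)"
    proof (rule infsum_eq_sum_superset_support[OF A(1,2)])
      fix z assume "\<bar>?\<eta>x z - ?\<eta>y z\<bar> \<noteq> 0"
      then have "?\<eta>x z \<noteq> 0 \<or> ?\<eta>y z \<noteq> 0" by auto
      then show "z \<in> A"
        using piece_map_support[OF i xy(1)] piece_map_support[OF i xy(2)] Ax Ay by blast
    qed
    then have diff: "(\<Sum>z\<in>A. \<bar>?\<eta>x z - ?\<eta>y z\<bar>) \<le> \<epsilon>"
      using piece_map_variation[OF i xy near] by simp
    have pointwise: "\<bar>a * ?\<eta>x z - b * ?\<eta>y z\<bar> \<le> \<bar>a - b\<bar> * ?\<eta>x z + b * \<bar>?\<eta>x z - ?\<eta>y z\<bar>" for z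
    proof -
      have "a * ?\<eta>x z - b * ?\<eta>y z = (a - b) * ?\<eta>x z + b * (?\<eta>x z - ?\<eta>y z)"
        by (simp add: algebra_simps)
      also have "\<bar>\<dots>\<bar> \<le> \<bar>(a - b) * ?\<eta>x z\<bar> + \<bar>b * (?\<eta>x z - ?\<eta>y z)\<bar>"
        by (rule abs_triangle_ineq)
      also have "\<dots> = \<bar>a - b\<bar> * ?\<eta>x z + b * \<bar>?\<eta>x z - ?\<eta>y z\<bar>"
        using piece_map_nonneg[OF i, of x z] ab by (simp add: abs_mult)
      finally show ?thesis .
    qed
    have "(\<Sum>z\<in>A. \<bar>a * ?\<eta>x z - b * ?\<eta>y z\<bar>)
        \<le> (\<Sum>z\<in>A. \<bar>a - b\<bar> * ?\<eta>x z + b * \<bar>?\<eta>x z - ?\<eta>y z\<bar>)"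
      by (rule sum_mono) (rule pointwise)
    also have "\<dots> = \<bar>a - b\<bar> * sum ?\<eta>x A + b * (\<Sum>z\<in>A. \<bar>?\<eta>x z - ?\<eta>y z\<bar>)"
      by (simp add: sum.distrib sum_distrib_left)
    also have "\<dots> \<le> \<bar>a - b\<bar> + b * \<epsilon>" using sx near diff ab by (simp add: mult_left_mono)
    finally show ?thesis .
  next
    assume hx: "has_near i x" and hy: "\<not> has_near i y"
    then have "piece_map i y = (\<lambda>_. 0)" unfolding piece_map_def by simp
    then have "(\<Sum>z\<in>A. \<bar>a * piece_map i x z - b * piece_map i y z\<bar>) = a * sum (piece_map i x) A"
      using piece_map_nonneg[OF i] ab by (simp add: abs_mult sum_distrib_left)
    then show ?thesis using sx ab hx hy by simp
  next
    assume hx: "\<not> has_near i x" and hy: "has_near i y"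
    then have "piece_map i x = (\<lambda>_. 0)" unfolding piece_map_def by simp
    then have "(\<Sum>z\<in>A. \<bar>a * piece_map i x z - b * piece_map i y z\<bar>) = b * sum (piece_map i y) A"
      using piece_map_nonneg[OF i] ab by (simp add: abs_mult sum_distrib_left)
    then show ?thesis using sy ab \<epsilon>_nonneg hx hy by simp
  next
    assume "\<not> has_near i x" "\<not> has_near i y"
    then show ?thesis using ab by simp
  qed
qed

lemma normalized_weight_variation:
  assumes xy: "x \<in> Z" "y \<in> Z" "d x y \<le> R"
  shows "(\<Sum>i\<in>{1..k}. \<bar>weight i x / total_weight x - weight i y / total_weight y\<bar>) \<le> 2 / real M"
proof -
  have "(\<Sum>i\<in>{1..k}. \<bar>weight i x / total_weight x - weight i y / total_weight y\<bar>)
      \<le> 2 * (\<Sum>i\<in>{1..k}. \<bar>weight i x - weight i y\<bar>)"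
    unfolding total_weight_def
    by (rule sum_abs_diff_normalized_le)
      (use weight_nonneg total_weight_ge_one xy in \<open>auto simp: total_weight_def\<close>)
  also have "(\<Sum>i\<in>{1..k}. \<bar>weight i x - weight i y\<bar>) \<le> (\<Sum>i\<in>{1..k}. 1 / (2^i * real M))"
    using weight_variation[OF _ xy] unfolding scale_def by (intro sum_mono) auto
  also have "\<dots> \<le> 1 / real M"
    by (rule sum_inverse_powers_of_two_le) (use M_pos in simp)
  finally show ?thesis by simp
qed

lemma glued_variation:
  assumes x: "x \<in> Z" and y: "y \<in> Z" and dxy: "d x y \<le> R"
  shows "infsum (\<lambda>z. \<bar>glued x z - glued y z\<bar>) X \<le> 2 / real M + \<epsilon>"
proof -
  define a where "a i = weight i x / total_weight x" for i
  define b where "b i = weight i y / total_weight y" for i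
  define A where "A = mcball x (support_radius + R)"
  have xy: "x \<in> X" "y \<in> X" using x y Z_subset by auto
  have A: "finite A" "A \<subseteq> X" "mcball x (support_radius + R) \<subseteq> A"
    unfolding A_def using finite_mcball by (auto simp: mcball_def)
  have supports: "mcball x support_radius \<subseteq> A" "mcball y support_radius \<subseteq> A"
    using support_subset[OF xy dxy A(3)] by auto
  have "total_weight x > 0" "total_weight y > 0"
    using total_weight_ge_one[OF x] total_weight_ge_one[OF y] by linarith+
  then have ab: "0 \<le> a i" "0 \<le> b i" "\<not> has_near i x \<Longrightarrow> a i = 0" "\<not> has_near i y \<Longrightarrow> b i = 0"
    for i
    unfolding a_def b_def using weight_nonneg[of i] weight_zero[of i] by simp_all
  have "infsum (\<lambda>z. \<bar>glued x z - glued y z\<bar>) X = (\<Sum>z\<in>A. \<bar>glued x z - glued y z\<bar>)"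
  proof (rule infsum_eq_sum_superset_support[OF A(1,2)])
    fix z assume "\<bar>glued x z - glued y z\<bar> \<noteq> 0"
    then have "glued x z \<noteq> 0 \<or> glued y z \<noteq> 0" by auto
    then show "z \<in> A" using glued_support[OF x] glued_support[OF y] supports by blast
  qed
  also have "\<dots> = (\<Sum>z\<in>A. \<bar>\<Sum>i\<in>{1..k}. a i * piece_map i x z - b i * piece_map i y z\<bar>)"
    unfolding glued_def a_def b_def by (simp add: sum_subtractf)
  also have "\<dots> \<le> (\<Sum>z\<in>A. \<Sum>i\<in>{1..k}. \<bar>a i * piece_map i x z - b i * piece_map i y z\<bar>)"
    by (intro sum_mono sum_abs)
  also have "\<dots> = (\<Sum>i\<in>{1..k}. \<Sum>z\<in>A. \<bar>a i * piece_map i x z - b i * piece_map i y z\<bar>)"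
    by (rule sum.swap)
  also have "\<dots> \<le> (\<Sum>i\<in>{1..k}. \<bar>a i - b i\<bar> + b i * \<epsilon>)"
    by (intro sum_mono piece_variation[OF _ xy dxy A ab])
  also have "\<dots> = (\<Sum>i\<in>{1..k}. \<bar>a i - b i\<bar>) + (\<Sum>i\<in>{1..k}. b i) * \<epsilon>"
    by (simp only: sum.distrib sum_distrib_right)
  also have "\<dots> \<le> 2 / real M + \<epsilon>"
    using normalized_weight_variation[OF x y dxy] sum_normalized_weight[OF y]
    unfolding a_def b_def by simp
  finally show ?thesis .
qed

lemma glued_A_map: "A_map_on Z R (2 / real M + \<epsilon>) (2^k * real M * R + S) glued"
proof -
  have "support_radius = 2^k * real M * R + S" unfolding support_radius_def scale_def by simp
  moreover have "A_map_on Z R (2 / real M + \<epsilon>) support_radius glued"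
    unfolding A_map_on_def
  proof (intro ballI conjI allI impI)
    fix x y z assume "x \<in> Z"
    show "0 \<le> glued x y" by (rule glued_nonneg[OF \<open>x \<in> Z\<close>])
    show "glued x y \<noteq> 0 \<Longrightarrow> y \<in> mcball x support_radius" by (rule glued_support[OF \<open>x \<in> Z\<close>])
    show "infsum (glued x) X = 1" by (rule infsum_glued[OF \<open>x \<in> Z\<close>])
    show "z \<in> Z \<Longrightarrow> d x z \<le> R \<Longrightarrow> infsum (\<lambda>y. \<bar>glued x y - glued z y\<bar>) X \<le> 2 / real M + \<epsilon>"
      by (rule glued_variation[OF \<open>x \<in> Z\<close>])
  qed
  ultimately show ?thesis by simp
qed

end

context bounded_geometry_metric
begin

lemma A_map_on_glue:
  fixes R :: real and M k :: nat and U :: "nat \<Rightarrow> 'a set set"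
  defines "R' \<equiv> (2 * (2^k * real M) + 1) * R"
  assumes "R > 0" "M \<ge> 1" "Z \<subseteq> X" "\<epsilon> \<ge> 0"
    and "Z \<subseteq> \<Union>(\<Union>i\<in>{1..k}. U i)"
    and "\<forall>i\<in>{1..k}. \<forall>W\<in>U i. W \<subseteq> Z"
    and "\<forall>i\<in>{1..k}. r_disjoint d ((2 * (2^i * real M) + 1) * R) (U i)"
    and pieces: "\<forall>i\<in>{1..k}. \<forall>W\<in>U i. \<exists>\<xi>. A_map_on W R' \<epsilon> S \<xi>"
  shows "\<exists>\<xi>. A_map_on Z R (2 / real M + \<epsilon>) (2^k * real M * R + S) \<xi>"
proof -
  define \<Xi> where "\<Xi> W = (SOME \<xi>. A_map_on W R' \<epsilon> S \<xi>)" for W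
  have "\<forall>i\<in>{1..k}. \<forall>W\<in>U i. A_map_on W R' \<epsilon> S (\<Xi> W)"
  proof (intro ballI)
    fix i W assume "i \<in> {1..k}" "W \<in> U i"
    then have "\<exists>\<xi>. A_map_on W R' \<epsilon> S \<xi>" using pieces by blast
    then show "A_map_on W R' \<epsilon> S (\<Xi> W)" unfolding \<Xi>_def by (rule someI_ex)
  qed
  then interpret A_gluing X d R M Z \<epsilon> k U \<Xi> S
    by unfold_locales (use assms(2-8) in \<open>simp_all add: R'_def\<close>)
  show ?thesis using glued_A_map by blast
qed

lemma uniformly_A_if_decomposes:
  assumes "\<forall>R. \<exists>\<Y>. uniformly_A \<Y> \<and> decomposes d \<F> R \<Y>"
  shows "uniformly_A \<F>"
  unfolding uniformly_A_def
proof (intro allI impI)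
  fix R \<epsilon> :: real assume R: "R > 0" and \<epsilon>: "\<epsilon> > 0"
  obtain M :: nat where M: "M \<ge> 1" "2 / real M \<le> \<epsilon> / 2"
    using ex_nat_two_div_le_half[OF \<epsilon>] by blast
  define Rs where "Rs i = (2 * (2^i * real M) + 1) * R" for i
  obtain \<Y> where \<Y>: "uniformly_A \<Y>" "decomposes d \<F> Rs \<Y>" using assms by blast
  obtain k where k: "\<forall>Z\<in>\<F>. \<exists>U :: nat \<Rightarrow> 'a set set.
        (\<forall>i\<in>{1..k}. U i \<subseteq> \<Y> \<and> (\<forall>V\<in>U i. V \<subseteq> Z) \<and> r_disjoint d (Rs i) (U i))
        \<and> Z \<subseteq> \<Union>(\<Union>i\<in>{1..k}. U i)"
    using \<Y>(2) unfolding decomposes_def by blast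
  have "Rs k > 0" unfolding Rs_def using R by (intro mult_pos_pos add_nonneg_pos) auto
  moreover have "\<epsilon> / 2 > 0" using \<epsilon> by simp
  ultimately obtain S where S: "\<forall>V\<in>\<Y>. V \<subseteq> X \<longrightarrow> (\<exists>\<xi>. A_map_on V (Rs k) (\<epsilon> / 2) S \<xi>)"
    using \<Y>(1) unfolding uniformly_A_def by blast
  have "\<exists>\<xi>. A_map_on Z R \<epsilon> (2^k * real M * R + S) \<xi>" if Z: "Z \<in> \<F>" "Z \<subseteq> X" for Z
  proof -
    obtain U :: "nat \<Rightarrow> 'a set set" where U: "\<forall>i\<in>{1..k}. U i \<subseteq> \<Y> \<and> (\<forall>V\<in>U i. V \<subseteq> Z)
        \<and> r_disjoint d (Rs i) (U i)" "Z \<subseteq> \<Union>(\<Union>i\<in>{1..k}. U i)"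
      using bspec[OF k Z(1)] by (elim exE conjE) (rule that)
    have "\<exists>\<xi>. A_map_on Z R (2 / real M + \<epsilon> / 2) (2^k * real M * R + S) \<xi>"
    proof (rule A_map_on_glue[OF R M(1) Z(2) _ U(2)])
      show "\<forall>i\<in>{1..k}. \<forall>W\<in>U i. W \<subseteq> Z" using U(1) by blast
      show "\<forall>i\<in>{1..k}. r_disjoint d ((2 * (2^i * real M) + 1) * R) (U i)"
        using U(1) unfolding Rs_def by blast
      show "\<forall>i\<in>{1..k}. \<forall>W\<in>U i. \<exists>\<xi>. A_map_on W ((2 * (2^k * real M) + 1) * R) (\<epsilon> / 2) S \<xi>"
      proof (intro ballI)
        fix i W assume "i \<in> {1..k}" "W \<in> U i"
        then have "W \<in> \<Y>" "W \<subseteq> X" using U(1) Z(2) by blast+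
        then show "\<exists>\<xi>. A_map_on W ((2 * (2^k * real M) + 1) * R) (\<epsilon> / 2) S \<xi>"
          using S unfolding Rs_def by blast
      qed
    qed (use \<epsilon> in simp)
    then obtain \<xi> where "A_map_on Z R (2 / real M + \<epsilon> / 2) (2^k * real M * R + S) \<xi>" ..
    moreover have "2 / real M + \<epsilon> / 2 \<le> \<epsilon>" using M(2) by linarith
    ultimately show ?thesis using A_map_on_mono by blast
  qed
  then show "\<exists>S. \<forall>V\<in>\<F>. V \<subseteq> X \<longrightarrow> (\<exists>\<xi>. A_map_on V R \<epsilon> S \<xi>)" by blast
qed

lemma finite_apc_uniformly_A: "finite_apc d \<F> \<Longrightarrow> uniformly_A \<F>"
proof (induction rule: finite_apc.induct)
  case (base \<F>)
  then show ?case by (rule bounded_family_uniformly_A)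
next
  case (step \<F>)
  then show ?case by (intro uniformly_A_if_decomposes) blast
qed

end

theorem theorem5p8:
  fixes X :: "'a set" and d :: "'a \<Rightarrow> 'a \<Rightarrow> real"
  assumes "Metric_space X d"
    and "discrete_space X d"
    and "bounded_geometry X d"
    and "finite_APC_complexity X d"
  shows "property_A X d"
proof -
  interpret bounded_geometry_metric X d
    using assms(1,3) by (simp add: bounded_geometry_metric_def bounded_geometry_metric_axioms_def)
  obtain \<F> where "X \<in> \<F>" "finite_apc d \<F>"
    using assms(4) unfolding finite_APC_complexity_def by blast
  then show ?thesis using finite_apc_uniformly_A uniformly_A_imp_property_A by blast
qed

end
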